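(* Let $G$ be a finite simple graph and suppose the automorphism group $\mathrm{Aut}(G)$ contains an element $\sigma$ of order $2$ such that, for every $v\in V(G)$, $\sigma(v)\neq v$ and $v\sigma(v)\notin E(G)$. Then $G$ is a $\mathcal{P}$ position for Grim.
   Context: Grim is a two-player game on a finite simple undirected graph. Any isolated vertices of the starting graph are deleted before play begins. Players alternate moves; a move consists of selecting a vertex of the current graph and deleting it together with all its incident edges, after which every vertex that has become isolated is also deleted. The player who makes the last legal move wins (a player facing the empty graph has no move and loses). A graph is an $\mathcal{N}$ position if the player about to move has a winning strategy, and a $\mathcal{P}$ position otherwise. An automorphism of $G$ is a permutation of $V(G)$ preserving adjacency. *)

theory Defs
  imports Main
begin

text \<open>Positions of Grim reached from a graph (V,E) are induced subgraphs on vertex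
  sets S \<subseteq> V, so a position is represented by its vertex set S (edges induced by E).\<close>

definition simple_graph :: "'a set \<Rightarrow> ('a \<Rightarrow> 'a \<Rightarrow> bool) \<Rightarrow> bool" where
  "simple_graph V E \<longleftrightarrow> finite V \<and> (\<forall>u v. E u v \<longrightarrow> u \<in> V \<and> v \<in> V)
     \<and> (\<forall>u v. E u v \<longrightarrow> E v u) \<and> (\<forall>v. \<not> E v v)"

definition del_isolated :: "('a \<Rightarrow> 'a \<Rightarrow> bool) \<Rightarrow> 'a set \<Rightarrow> 'a set" where
  "del_isolated E S = {v \<in> S. \<exists>u \<in> S. E v u}"

definition grim_move :: "('a \<Rightarrow> 'a \<Rightarrow> bool) \<Rightarrow> 'a set \<Rightarrow> 'a \<Rightarrow> 'a set" where
  "grim_move E S v = del_isolated E (S - {v})"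

lemma bex_cong_fundef[fundef_cong]:
  "S = S' \<Longrightarrow> (\<And>x. x \<in> S' \<Longrightarrow> P x = P' x) \<Longrightarrow> (\<exists>x\<in>S. P x) = (\<exists>x\<in>S'. P' x)"
  by auto

function grim_N :: "('a \<Rightarrow> 'a \<Rightarrow> bool) \<Rightarrow> 'a set \<Rightarrow> bool" where
  "grim_N E S = (if finite S then (\<exists>v \<in> S. \<not> grim_N E (grim_move E S v)) else False)"
  by auto
lemma grim_move_card_less:
  "finite S \<Longrightarrow> v \<in> S \<Longrightarrow> card (grim_move E S v) < card S"
proof -
  assume f: "finite S" and v: "v \<in> S"
  have "grim_move E S v \<subseteq> S - {v}" unfolding grim_move_def del_isolated_def by auto
  hence "card (grim_move E S v) \<le> card (S - {v})" using f by (simp add: card_mono)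
  also have "\<dots> < card S" using f v by (meson card_Diff1_less)
  finally show ?thesis .
qed

termination
  by (relation "measure (\<lambda>(E, S). card S)") (auto simp: grim_move_card_less)

definition grim_P :: "('a \<Rightarrow> 'a \<Rightarrow> bool) \<Rightarrow> 'a set \<Rightarrow> bool" where
  "grim_P E S \<longleftrightarrow> \<not> grim_N E S"

definition grim_start :: "'a set \<Rightarrow> ('a \<Rightarrow> 'a \<Rightarrow> bool) \<Rightarrow> 'a set" where
  "grim_start V E = del_isolated E V"

definition graph_automorphism :: "'a set \<Rightarrow> ('a \<Rightarrow> 'a \<Rightarrow> bool) \<Rightarrow> ('a \<Rightarrow> 'a) \<Rightarrow> bool" where
  "graph_automorphism V E \<sigma> \<longleftrightarrow> bij_betw \<sigma> V V \<and> (\<forall>u\<in>V. \<forall>v\<in>V. E u v \<longleftrightarrow> E (\<sigma> u) (\<sigma> v))"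

definition has_order_two :: "'a set \<Rightarrow> ('a \<Rightarrow> 'a) \<Rightarrow> bool" where
  "has_order_two V \<sigma> \<longleftrightarrow> (\<forall>v\<in>V. \<sigma> (\<sigma> v) = v) \<and> (\<exists>v\<in>V. \<sigma> v \<noteq> v)"

end

theory Submission
  imports Defs
begin

text \<open>Tweedledum-Tweedledee: the second player answers every move v by its mirror image
  \<sigma> v. This reply is always legal, because v and \<sigma> v are distinct and non-adjacent and
  \<sigma> v keeps the mirror image of a neighbour of v. After both moves the position is again
  the graph induced on a \<sigma>-invariant vertex set, so the second player never runs out of moves.\<close>

declare grim_N.simps [simp del]

lemma grim_N_iff: "grim_N E S \<longleftrightarrow> finite S \<and> (\<exists>v\<in>S. \<not> grim_N E (grim_move E S v))"
  by (subst grim_N.simps) auto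

lemma del_isolated_subset: "del_isolated E S \<subseteq> S"
  unfolding del_isolated_def by blast

lemma del_isolated_Diff_del_isolated:
  assumes "\<forall>u v. E u v \<longrightarrow> E v u"
  shows "del_isolated E (del_isolated E A - B) = del_isolated E (A - B)"
  using assms unfolding del_isolated_def by blast

lemma grim_move_grim_move:
  assumes "\<forall>u v. E u v \<longrightarrow> E v u"
  shows "grim_move E (grim_move E (del_isolated E S) v) w = del_isolated E (S - {v, w})"
  using del_isolated_Diff_del_isolated[OF assms]
  unfolding grim_move_def by (simp add: Diff_insert2[symmetric])

locale free_nonadjacent_involution =
  fixes V :: "'a set" and E :: "'a \<Rightarrow> 'a \<Rightarrow> bool" and \<sigma> :: "'a \<Rightarrow> 'a"
  assumes simple: "simple_graph V E"
    and automorphism: "graph_automorphism V E \<sigma>"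
    and involution: "\<forall>v\<in>V. \<sigma> (\<sigma> v) = v"
    and free_nonadjacent: "\<forall>v\<in>V. \<sigma> v \<noteq> v \<and> \<not> E v (\<sigma> v)"
begin

lemma finite_V: "finite V"
  and edge_in_V: "E u v \<Longrightarrow> u \<in> V \<and> v \<in> V"
  and edge_sym: "\<forall>u v. E u v \<longrightarrow> E v u"
  using simple unfolding simple_graph_def by auto

lemma edge_image: "E u v \<Longrightarrow> E (\<sigma> u) (\<sigma> v)"
  using automorphism edge_in_V unfolding graph_automorphism_def by blast

lemma inj_on_V: "inj_on \<sigma> V"
  using automorphism unfolding graph_automorphism_def bij_betw_def by blast

lemma image_V: "\<sigma> ` V = V"
  using automorphism unfolding graph_automorphism_def bij_betw_def by blast

lemma mirror_move_legal:
  assumes "S \<subseteq> V" "\<sigma> ` S = S" "v \<in> del_isolated E S"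
  shows "\<sigma> v \<in> grim_move E (del_isolated E S) v"
proof -
  obtain u where "v \<in> S" "u \<in> S" "E v u"
    using assms(3) unfolding del_isolated_def by blast
  have "v \<in> V" using \<open>v \<in> S\<close> assms(1) by blast
  have \<sigma>_in_S: "\<sigma> v \<in> S" "\<sigma> u \<in> S" using \<open>v \<in> S\<close> \<open>u \<in> S\<close> assms(2) by blast+
  have edge: "E (\<sigma> v) (\<sigma> u)" using edge_image[OF \<open>E v u\<close>] .
  have "\<sigma> u \<noteq> v"
  proof
    assume "\<sigma> u = v"
    then have "E v (\<sigma> v)" using edge edge_sym by simp
    then show False using free_nonadjacent \<open>v \<in> V\<close> by blast
  qed
  moreover have "\<sigma> v \<noteq> v" using free_nonadjacent \<open>v \<in> V\<close> by blast
  ultimately show ?thesis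
    using \<sigma>_in_S edge edge_sym unfolding grim_move_def del_isolated_def by blast
qed

lemma invariant_Diff_orbit:
  assumes "S \<subseteq> V" "\<sigma> ` S = S" "v \<in> S"
  shows "\<sigma> ` (S - {v, \<sigma> v}) = S - {v, \<sigma> v}"
proof -
  have "inj_on \<sigma> S" using inj_on_V assms(1) inj_on_subset by blast
  then have "\<sigma> ` (S - {v, \<sigma> v}) = \<sigma> ` S - \<sigma> ` {v, \<sigma> v}"
    using assms by (intro inj_on_image_set_diff) auto
  also have "\<dots> = S - {v, \<sigma> v}"
    using assms involution by (auto simp: insert_commute)
  finally show ?thesis .
qed

lemma grim_P_invariant:
  assumes "S \<subseteq> V" "\<sigma> ` S = S"
  shows "grim_P E (del_isolated E S)"
  using assms
proof (induction "card S" arbitrary: S rule: less_induct)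
  case less
  let ?D = "del_isolated E S"
  have "finite S" using less.prems(1) finite_V finite_subset by blast
  show ?case unfolding grim_P_def
  proof
    assume "grim_N E ?D"
    then obtain v where v: "v \<in> ?D" and first_move: "\<not> grim_N E (grim_move E ?D v)"
      unfolding grim_N_iff[of E ?D] by blast
    have "v \<in> S" using del_isolated_subset v by (rule subsetD)
    let ?S' = "S - {v, \<sigma> v}"
    have "card ?S' < card S"
      using \<open>finite S\<close> \<open>v \<in> S\<close> by (intro psubset_card_mono) auto
    moreover have "?S' \<subseteq> V" using less.prems(1) by blast
    ultimately have "grim_P E (del_isolated E ?S')"
      using less.hyps invariant_Diff_orbit[OF less.prems \<open>v \<in> S\<close>] by presburger
    then have "\<not> grim_N E (grim_move E (grim_move E ?D v) (\<sigma> v))"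
      unfolding grim_P_def grim_move_grim_move[OF edge_sym] .
    moreover have "finite (grim_move E ?D v)"
      using \<open>finite S\<close> del_isolated_subset unfolding grim_move_def
      by (meson Diff_subset finite_subset)
    ultimately have "grim_N E (grim_move E ?D v)"
      using mirror_move_legal[OF less.prems v] unfolding grim_N_iff[of E "grim_move E ?D v"]
      by blast
    with first_move show False by contradiction
  qed
qed

end

theorem theorem4p2:
  fixes V :: "'a set" and E :: "'a \<Rightarrow> 'a \<Rightarrow> bool" and \<sigma> :: "'a \<Rightarrow> 'a"
  assumes "simple_graph V E"
    and "graph_automorphism V E \<sigma>"
    and "has_order_two V \<sigma>"
    and "\<forall>v\<in>V. \<sigma> v \<noteq> v \<and> \<not> E v (\<sigma> v)"
  shows "grim_P E (grim_start V E)"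
proof -
  interpret free_nonadjacent_involution V E \<sigma>
    using assms unfolding has_order_two_def by unfold_locales auto
  show ?thesis
    unfolding grim_start_def using grim_P_invariant[OF order_refl image_V] .
qed

end
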